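(* Let $V = \{v_1, \dots, v_d\}$ be totally ordered by $v_1 < \cdots < v_d$. Let $\Gamma$ be the order complex (complex of chains) of the poset of intervals $[v_i, v_j] = \{v_i, v_{i+1}, \dots, v_j\}$, $1 \le i \le j \le d$, ordered by inclusion. For a chain $G \in \Gamma$, let $\sigma(G) \subseteq V$ be the set of all endpoints $v_i, v_j$ of the intervals $[v_i, v_j]$ in $G$. Then $\sigma : \Gamma \to 2^V$ makes $\Gamma$ a geometric simplicial subdivision of the simplex $2^V$. Moreover, $\Gamma$ has exactly $2^{d-1}$ facets.
   Context: A simplicial subdivision of $2^V$ is a simplicial complex $\Gamma$ with a map $\sigma : \Gamma \to 2^V$ such that, for each $F \subseteq V$, $\sigma^{-1}(2^F)$ is a subcomplex homeomorphic to a ball of dimension $|F|-1$ whose interior is $\sigma^{-1}(F)$. It is geometric if there is a geometric realization of $\Gamma$ that triangulates a geometric simplex realizing $2^V$, with each face $G$ of $\Gamma$ realized inside the face $\sigma(G)$ of that simplex, and with the relative interior of $G$ contained in the relative interior of $\sigma(G)$. *)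

theory Defs
  imports "HOL-Analysis.Analysis"
begin

definition simplicial_complex :: "'v set set \<Rightarrow> bool" where
  "simplicial_complex \<Gamma> \<longleftrightarrow> finite \<Gamma> \<and> {} \<in> \<Gamma> \<and> (\<forall>G\<in>\<Gamma>. finite G) \<and>
     (\<forall>G\<in>\<Gamma>. \<forall>H. H \<subseteq> G \<longrightarrow> H \<in> \<Gamma>)"

definition facets :: "'v set set \<Rightarrow> 'v set set" where
  "facets \<Gamma> = {G \<in> \<Gamma>. \<forall>H\<in>\<Gamma>. G \<subseteq> H \<longrightarrow> H = G}"

definition geometric_realization :: "'v set set \<Rightarrow> ('v \<Rightarrow> 'e::euclidean_space) \<Rightarrow> bool" where
  "geometric_realization \<Gamma> f \<longleftrightarrow>
     (\<forall>G\<in>\<Gamma>. inj_on f G \<and> \<not> affine_dependent (f ` G)) \<and>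
     (\<forall>G\<in>\<Gamma>. \<forall>H\<in>\<Gamma>. convex hull (f ` G) \<inter> convex hull (f ` H) = convex hull (f ` (G \<inter> H)))"

definition polyhedron :: "'v set set \<Rightarrow> ('v \<Rightarrow> 'e::euclidean_space) \<Rightarrow> 'e set" where
  "polyhedron \<Delta> f = (\<Union>G\<in>\<Delta>. convex hull (f ` G))"

text \<open>Topological simplicial subdivision of 2^V (with respect to the realization f
of \<Gamma>): for every F \<subseteq> V, the preimage of 2^F is a subcomplex whose realization is
homeomorphic to a ball of dimension |F|-1, with interior the union of the
relative interiors of the faces in the preimage of F. (The (-1)-ball is empty.)\<close>
definition simplicial_subdivision_wrt ::
  "'a set \<Rightarrow> 'v set set \<Rightarrow> ('v set \<Rightarrow> 'a set) \<Rightarrow> ('v \<Rightarrow> 'e::euclidean_space) \<Rightarrow> bool" where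
  "simplicial_subdivision_wrt V \<Gamma> \<sigma> f \<longleftrightarrow>
     simplicial_complex \<Gamma> \<and> geometric_realization \<Gamma> f \<and> (\<forall>G\<in>\<Gamma>. \<sigma> G \<subseteq> V) \<and>
     (\<forall>F. F \<subseteq> V \<longrightarrow>
        (\<forall>G\<in>\<Gamma>. \<forall>H. \<sigma> G \<subseteq> F \<and> H \<subseteq> G \<longrightarrow> \<sigma> H \<subseteq> F) \<and>
        (F = {} \<longrightarrow> {G\<in>\<Gamma>. \<sigma> G \<subseteq> F} = {{}}) \<and>
        (F \<noteq> {} \<longrightarrow>
          (\<exists>(T::'e set) h k. subspace T \<and> dim T = card F - 1 \<and>
             homeomorphism (polyhedron {G\<in>\<Gamma>. \<sigma> G \<subseteq> F} f) (cball 0 1 \<inter> T) h k \<and>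
             h ` (\<Union>G\<in>{G\<in>\<Gamma>. \<sigma> G = F}. rel_interior (convex hull (f ` G))) = ball 0 1 \<inter> T)))"

definition geometric_subdivision ::
  "'e::euclidean_space itself \<Rightarrow> 'a set \<Rightarrow> 'v set set \<Rightarrow> ('v set \<Rightarrow> 'a set) \<Rightarrow> bool" where
  "geometric_subdivision (_::'e itself) V \<Gamma> \<sigma> \<longleftrightarrow>
     finite V \<and>
     (\<exists>(p::'a \<Rightarrow> 'e) (f::'v \<Rightarrow> 'e).
        inj_on p V \<and> \<not> affine_dependent (p ` V) \<and>
        simplicial_subdivision_wrt V \<Gamma> \<sigma> f \<and>
        polyhedron \<Gamma> f = convex hull (p ` V) \<and>
        (\<forall>G\<in>\<Gamma>. convex hull (f ` G) \<subseteq> convex hull (p ` \<sigma> G) \<and>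
                 rel_interior (convex hull (f ` G)) \<subseteq> rel_interior (convex hull (p ` \<sigma> G))))"

definition intervals :: "('n::{finite,linorder}) set set" where
  "intervals = {{a..b} | a b. a \<le> b}"

definition interval_chain_complex :: "('n::{finite,linorder}) set set set" where
  "interval_chain_complex =
     {G. G \<subseteq> intervals \<and> (\<forall>I\<in>G. \<forall>J\<in>G. I \<subseteq> J \<or> J \<subseteq> I)}"

definition endpoints :: "('n::{finite,linorder}) set set \<Rightarrow> 'n set" where
  "endpoints G = {x. \<exists>a b. a \<le> b \<and> {a..b} \<in> G \<and> (x = a \<or> x = b)}"

end

theory Submission
  imports Defs
begin

text \<open>
Realize the chain complex in the standard simplex with vertices \<open>e\<^sub>v\<close>, sending the interval
\<open>[a, b]\<close> to the midpoint of \<open>e\<^sub>a\<close> and \<open>e\<^sub>b\<close>. The key fact is that every nonnegative vector \<open>x\<close>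
is, in exactly one way, a positive combination of the vertices of a chain: the largest interval
must be \<open>[min supp x, max supp x]\<close>, and since no smaller interval of the chain contains both of its
endpoints, its coefficient is forced by the smaller of the two endpoint coordinates. Peeling it
off and recursing gives existence and uniqueness, and the support of \<open>x\<close> is exactly the set of
endpoints of the chain. Hence the simplices of chains are nondegenerate and meet properly, the
simplices of chains with endpoints in \<open>F\<close> tile the face of the simplex spanned by \<open>F\<close>, and those
with endpoint set \<open>F\<close> tile its relative interior, which is an open ball.

A maximal chain of subintervals of \<open>[a, b]\<close> consists of \<open>[a, b]\<close> and a maximal chain of either
\<open>[a, b] - {a}\<close> or \<open>[a, b] - {b}\<close>, so the number of facets doubles with each further element.
\<close>

section \<open>Intervals and chains of intervals\<close>

lemma interval_Min_Max:
  fixes a b :: "'n::{finite,linorder}"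
  assumes "a \<le> b"
  shows "Min {a..b} = a" and "Max {a..b} = b"
  using assms by (auto intro: Min_eqI Max_eqI)

lemma intervals_Min_Max:
  fixes I :: "'n::{finite,linorder} set"
  assumes "I \<in> intervals"
  shows "{Min I..Max I} = I" and "Min I \<le> Max I" and "Min I \<in> I" and "Max I \<in> I"
proof -
  obtain a b where "a \<le> b" "I = {a..b}"
    using assms unfolding intervals_def by blast
  then show "{Min I..Max I} = I" "Min I \<le> Max I" "Min I \<in> I" "Max I \<in> I"
    by (simp_all add: interval_Min_Max)
qed

lemma intervals_order_convex:
  fixes I :: "'n::{finite,linorder} set"
  assumes "I \<in> intervals" "x \<in> I" "z \<in> I"
  shows "{x..z} \<subseteq> I"
proof
  fix y assume y: "y \<in> {x..z}"
  have "Min I \<le> x" "z \<le> Max I"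
    using assms(2,3) by simp_all
  then have "y \<in> {Min I..Max I}"
    using y by (meson atLeastAtMost_iff order_trans)
  then show "y \<in> I"
    using intervals_Min_Max(1)[OF assms(1)] by simp
qed

lemma intervals_ne: "I \<in> intervals \<Longrightarrow> I \<noteq> {}"
  using intervals_Min_Max(3) by blast

lemma intervalsI_order_convex:
  fixes I :: "'n::{finite,linorder} set"
  assumes "I \<noteq> {}" and "\<And>x y z. x \<in> I \<Longrightarrow> z \<in> I \<Longrightarrow> x \<le> y \<Longrightarrow> y \<le> z \<Longrightarrow> y \<in> I"
  shows "I \<in> intervals"
proof -
  have "{Min I..Max I} \<subseteq> I"
  proof
    fix y assume "y \<in> {Min I..Max I}"
    then show "y \<in> I"
      using assms(1) by (intro assms(2)[OF Min_in Max_in]) auto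
  qed
  moreover have "I \<subseteq> {Min I..Max I}"
    by (simp add: subset_iff)
  ultimately have "I = {Min I..Max I}"
    by blast
  moreover have "Max I \<in> I"
    using assms(1) by simp
  then have "Min I \<le> Max I"
    by simp
  ultimately show ?thesis
    unfolding intervals_def by blast
qed

lemma intervals_Diff_endpoint:
  fixes J :: "'n::{finite,linorder} set"
  assumes J: "J \<in> intervals" and c: "c = Min J \<or> c = Max J" and "J \<noteq> {c}"
  shows "J - {c} \<in> intervals"
proof (rule intervalsI_order_convex)
  show "J - {c} \<noteq> {}"
    using intervals_ne[OF J] \<open>J \<noteq> {c}\<close> by blast
  fix x y z assume x: "x \<in> J - {c}" and z: "z \<in> J - {c}" and "x \<le> y" "y \<le> z"
  have "y \<in> J"
    using intervals_order_convex[OF J, of x z] x z \<open>x \<le> y\<close> \<open>y \<le> z\<close> by auto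
  moreover have "Min J \<le> x" "z \<le> Max J"
    using x z by simp_all
  then have "y \<noteq> c"
    using c x z \<open>x \<le> y\<close> \<open>y \<le> z\<close> by (metis Diff_iff insertI1 order.antisym order.trans)
  ultimately show "y \<in> J - {c}"
    by blast
qed

lemma interval_subset_interval:
  fixes I :: "'n::{finite,linorder} set"
  assumes "I \<in> intervals" "Min I \<in> {a..b}" "Max I \<in> {a..b}"
  shows "I \<subseteq> {a..b}"
proof -
  have "{Min I..Max I} \<subseteq> {a..b}"
    using assms(2,3) by auto
  then show ?thesis
    using intervals_Min_Max(1)[OF assms(1)] by metis
qed

lemma endpoints_eq:
  assumes "G \<subseteq> intervals"
  shows "endpoints G = (\<Union>I\<in>G. {Min I, Max I})"
proof
  show "endpoints G \<subseteq> (\<Union>I\<in>G. {Min I, Max I})"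
  proof
    fix x assume "x \<in> endpoints G"
    then obtain a b where "a \<le> b" "{a..b} \<in> G" "x = a \<or> x = b"
      unfolding endpoints_def by blast
    then show "x \<in> (\<Union>I\<in>G. {Min I, Max I})"
      by (intro UN_I[of "{a..b}"]) (auto simp: interval_Min_Max)
  qed
  show "(\<Union>I\<in>G. {Min I, Max I}) \<subseteq> endpoints G"
  proof
    fix x assume "x \<in> (\<Union>I\<in>G. {Min I, Max I})"
    then obtain I where "I \<in> G" "x = Min I \<or> x = Max I"
      by blast
    moreover have "I \<in> intervals"
      using assms \<open>I \<in> G\<close> by blast
    then have "Min I \<le> Max I" "{Min I..Max I} \<in> G"
      using \<open>I \<in> G\<close> by (simp_all add: intervals_Min_Max(1,2))
    ultimately show "x \<in> endpoints G"
      unfolding endpoints_def by blast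
  qed
qed

lemma endpoints_mono: "H \<subseteq> G \<Longrightarrow> endpoints H \<subseteq> endpoints G"
  unfolding endpoints_def by blast

lemma endpoints_subset_Union: "G \<subseteq> intervals \<Longrightarrow> endpoints G \<subseteq> \<Union>G"
  using intervals_Min_Max(3,4) by (auto simp: endpoints_eq)

lemma endpoints_eq_empty_iff: "G \<subseteq> intervals \<Longrightarrow> endpoints G = {} \<longleftrightarrow> G = {}"
  by (simp add: endpoints_eq)

lemma interval_chain_complex_intervals: "G \<in> interval_chain_complex \<Longrightarrow> G \<subseteq> intervals"
  unfolding interval_chain_complex_def by blast

lemma interval_chain_complex_chain:
  "G \<in> interval_chain_complex \<Longrightarrow> I \<in> G \<Longrightarrow> J \<in> G \<Longrightarrow> I \<subseteq> J \<or> J \<subseteq> I"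
  unfolding interval_chain_complex_def by blast

lemma interval_chain_complex_subset:
  "G \<in> interval_chain_complex \<Longrightarrow> H \<subseteq> G \<Longrightarrow> H \<in> interval_chain_complex"
  unfolding interval_chain_complex_def by blast

lemma interval_chain_complex_insert:
  assumes "G \<in> interval_chain_complex" "J \<in> intervals" "\<forall>I\<in>G. I \<subseteq> J"
  shows "insert J G \<in> interval_chain_complex"
  using assms unfolding interval_chain_complex_def by blast

lemma chain_top:
  assumes "G \<in> interval_chain_complex" "G \<noteq> {}"
  obtains I0 where "I0 \<in> G" "\<forall>J\<in>G. J \<subseteq> I0"
proof -
  obtain I0 where I0: "I0 \<in> G" and max: "\<forall>J\<in>G. I0 \<subseteq> J \<longrightarrow> I0 = J"
    using finite_has_maximal[OF finite assms(2)] by blast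
  have "J \<subseteq> I0" if "J \<in> G" for J
    using interval_chain_complex_chain[OF assms(1) I0 that] max that by blast
  then show ?thesis
    using that I0 by blast
qed

text \<open>An interval containing both endpoints of the top of the chain would be the top itself.\<close>

lemma chain_top_endpoint_missing:
  assumes G: "G \<in> interval_chain_complex" and "I0 \<in> G" and top: "\<forall>J\<in>G. J \<subseteq> I0"
  obtains c where "c = Min I0 \<or> c = Max I0" and "\<forall>J\<in>G - {I0}. c \<notin> J"
proof -
  have "(\<forall>J\<in>G - {I0}. Min I0 \<notin> J) \<or> (\<forall>J\<in>G - {I0}. Max I0 \<notin> J)"
  proof (rule ccontr)
    assume "\<not> ?thesis"
    then obtain J1 J2 where J: "J1 \<in> G - {I0}" "Min I0 \<in> J1" "J2 \<in> G - {I0}" "Max I0 \<in> J2"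
      by blast
    have "J1 \<subseteq> J2 \<or> J2 \<subseteq> J1"
      using interval_chain_complex_chain[OF G] J(1,3) by blast
    then obtain K where K: "K \<in> G - {I0}" "Min I0 \<in> K" "Max I0 \<in> K"
      using J by blast
    have "K \<in> intervals" "I0 \<in> intervals"
      using K \<open>I0 \<in> G\<close> interval_chain_complex_intervals[OF G] by blast+
    then have "{Min I0..Max I0} \<subseteq> K"
      using K intervals_order_convex by blast
    then have "I0 \<subseteq> K"
      using intervals_Min_Max(1)[OF \<open>I0 \<in> intervals\<close>] by simp
    then show False
      using K top by blast
  qed
  then show ?thesis
    using that by blast
qed

definition interval_vertex :: "'n::{finite,linorder} set \<Rightarrow> (real, 'n) vec" where
  "interval_vertex I = (1/2) *\<^sub>R (axis (Min I) 1 + axis (Max I) 1)"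

lemma interval_vertex_nth:
  "interval_vertex I $ v = (if v = Min I then 1/2 else 0) + (if v = Max I then 1/2 else 0)"
  by (simp add: interval_vertex_def axis_def)

lemma interval_vertex_nonneg: "0 \<le> interval_vertex I $ v"
  by (simp add: interval_vertex_nth)

lemma interval_vertex_pos_iff: "0 < interval_vertex I $ v \<longleftrightarrow> v = Min I \<or> v = Max I"
  by (simp add: interval_vertex_nth)

lemma interval_vertex_Max: "interval_vertex I $ Max I = interval_vertex I $ Min I"
  by (simp add: interval_vertex_nth)

lemma interval_vertex_support: "{v. 0 < interval_vertex I $ v} = {Min I, Max I}"
  by (auto simp: interval_vertex_pos_iff)

lemma sum_interval_vertex: "sum (($) (interval_vertex I)) UNIV = 1"
  by (simp add: interval_vertex_nth sum.distrib)

lemma inj_on_interval_vertex: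
  "inj_on (interval_vertex :: 'n::{finite,linorder} set \<Rightarrow> _) intervals"
proof (rule inj_onI)
  fix I J :: "'n set"
  assume I: "I \<in> intervals" and J: "J \<in> intervals" and eq: "interval_vertex I = interval_vertex J"
  have "{Min I, Max I} = {Min J, Max J}"
    using interval_vertex_support[of I] interval_vertex_support[of J] eq by simp
  then have "Min {Min I, Max I} = Min {Min J, Max J}" "Max {Min I, Max I} = Max {Min J, Max J}"
    by simp_all
  then have "Min I = Min J" "Max I = Max J"
    using intervals_Min_Max(2)[OF I] intervals_Min_Max(2)[OF J] by (simp_all add: min_def max_def)
  then show "I = J"
    using intervals_Min_Max(1)[OF I] intervals_Min_Max(1)[OF J] by metis
qed

section \<open>Positive combinations of the vertices of a chain\<close>

definition chain_comb :: "'n::{finite,linorder} set set \<Rightarrow> ('n set \<Rightarrow> real) \<Rightarrow> (real, 'n) vec \<Rightarrow> bool" where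
  "chain_comb G l x \<longleftrightarrow>
     G \<in> interval_chain_complex \<and> (\<forall>I\<in>G. 0 < l I) \<and> x = (\<Sum>I\<in>G. l I *\<^sub>R interval_vertex I)"

lemma chain_comb_nth: "chain_comb G l x \<Longrightarrow> x $ v = (\<Sum>I\<in>G. l I * interval_vertex I $ v)"
  unfolding chain_comb_def by simp

lemma chain_comb_nonneg:
  assumes "chain_comb G l x"
  shows "0 \<le> x $ v"
  using assms unfolding chain_comb_nth[OF assms] chain_comb_def
  by (intro sum_nonneg mult_nonneg_nonneg) (auto intro: less_imp_le interval_vertex_nonneg)

lemma chain_comb_support:
  assumes "chain_comb G l x"
  shows "{v. x $ v \<noteq> 0} = endpoints G"
proof -
  have pos: "\<forall>I\<in>G. 0 < l I" and G: "G \<subseteq> intervals"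
    using assms interval_chain_complex_intervals unfolding chain_comb_def by auto
  have "x $ v = 0 \<longleftrightarrow> (\<forall>I\<in>G. l I * interval_vertex I $ v = 0)" for v
    unfolding chain_comb_nth[OF assms] using pos
    by (intro sum_nonneg_eq_0_iff) (auto intro: mult_nonneg_nonneg less_imp_le interval_vertex_nonneg)
  moreover have "(\<forall>I\<in>G. l I * interval_vertex I $ v = 0) \<longleftrightarrow> (\<forall>I\<in>G. \<not> 0 < interval_vertex I $ v)" for v
    using pos interval_vertex_nonneg[of _ v] by (force simp: order.order_iff_strict)
  ultimately show ?thesis
    by (auto simp: endpoints_eq[OF G] interval_vertex_pos_iff)
qed

lemma chain_comb_coord_sum:
  assumes "chain_comb G l x"
  shows "sum (($) x) UNIV = sum l G"
proof -
  have "sum (($) x) UNIV = (\<Sum>v\<in>UNIV. \<Sum>I\<in>G. l I * interval_vertex I $ v)"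
    by (simp add: chain_comb_nth[OF assms])
  also have "\<dots> = (\<Sum>I\<in>G. l I * sum (($) (interval_vertex I)) UNIV)"
    by (simp add: sum.swap[of _ UNIV] sum_distrib_left)
  finally show ?thesis
    by (simp add: sum_interval_vertex)
qed

lemma chain_comb_empty: "chain_comb {} l x \<longleftrightarrow> x = 0"
  unfolding chain_comb_def interval_chain_complex_def by simp

lemma chain_comb_eq_0_iff: "chain_comb G l x \<Longrightarrow> x = 0 \<longleftrightarrow> G = {}"
  using chain_comb_support[of G l x] endpoints_eq_empty_iff[of G]
    interval_chain_complex_intervals[of G]
  by (auto simp: chain_comb_def vec_eq_iff)

lemma chain_comb_Diff:
  assumes "chain_comb G l x" "I0 \<in> G"
  shows "chain_comb (G - {I0}) l (x - l I0 *\<^sub>R interval_vertex I0)"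
  using assms interval_chain_complex_subset[of G "G - {I0}"]
  by (auto simp: chain_comb_def sum.remove)

lemma chain_comb_insert:
  assumes "chain_comb G l y" "I0 \<in> intervals" "I0 \<notin> G" "\<forall>J\<in>G. J \<subseteq> I0" "0 < t"
  shows "chain_comb (insert I0 G) (l(I0 := t)) (y + t *\<^sub>R interval_vertex I0)"
proof -
  have "(\<Sum>I\<in>G. (l(I0 := t)) I *\<^sub>R interval_vertex I) = y"
    using assms(1,3) unfolding chain_comb_def by (auto intro: sum.cong)
  then show ?thesis
    using assms interval_chain_complex_insert unfolding chain_comb_def by (auto simp: add.commute)
qed

lemma chain_comb_top:
  assumes x: "chain_comb G l x" and "I0 \<in> G" and top: "\<forall>J\<in>G. J \<subseteq> I0"
  defines "S \<equiv> {v. x $ v \<noteq> 0}"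
  shows "I0 = {Min S..Max S}"
    and "l I0 * interval_vertex I0 $ Min I0 = min (x $ Min I0) (x $ Max I0)"
proof -
  have G: "G \<in> interval_chain_complex" and I0: "I0 \<in> intervals"
    using x \<open>I0 \<in> G\<close> interval_chain_complex_intervals unfolding chain_comb_def by auto
  have S: "S = endpoints G"
    unfolding S_def by (rule chain_comb_support[OF x])
  have "S \<subseteq> I0"
    using S endpoints_subset_Union[OF interval_chain_complex_intervals[OF G]] top by blast
  moreover have "Min I0 \<in> S" "Max I0 \<in> S"
    using S \<open>I0 \<in> G\<close> endpoints_eq[OF interval_chain_complex_intervals[OF G]] by auto
  ultimately have "Min S = Min I0" "Max S = Max I0"
    by (auto intro!: Min_eqI Max_eqI)
  then show "I0 = {Min S..Max S}"
    using intervals_Min_Max(1)[OF I0] by simp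
  define y where "y = x - l I0 *\<^sub>R interval_vertex I0"
  have y: "chain_comb (G - {I0}) l y"
    unfolding y_def by (rule chain_comb_Diff[OF x \<open>I0 \<in> G\<close>])
  obtain c where c: "c = Min I0 \<or> c = Max I0" "\<forall>J\<in>G - {I0}. c \<notin> J"
    using chain_top_endpoint_missing[OF G \<open>I0 \<in> G\<close> top] by blast
  have "G - {I0} \<subseteq> intervals"
    using interval_chain_complex_intervals[OF G] by blast
  then have "c \<notin> endpoints (G - {I0})"
    using c(2) endpoints_subset_Union[of "G - {I0}"] by blast
  then have "y $ c = 0"
    using chain_comb_support[OF y] by blast
  moreover have "0 \<le> y $ Min I0" "0 \<le> y $ Max I0"
    using chain_comb_nonneg[OF y] by auto
  moreover have "y $ v = x $ v - l I0 * interval_vertex I0 $ Min I0" if "v = Min I0 \<or> v = Max I0" for v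
    using that interval_vertex_Max[of I0] unfolding y_def by auto
  ultimately show "l I0 * interval_vertex I0 $ Min I0 = min (x $ Min I0) (x $ Max I0)"
    using c(1) by (smt (verit))
qed

lemma chain_comb_unique:
  "chain_comb G l x \<Longrightarrow> chain_comb H m x \<Longrightarrow> G = H \<and> (\<forall>I\<in>G. l I = m I)"
proof (induction "card G" arbitrary: G H x rule: less_induct)
  case less
  note x = less.prems(1) and x' = less.prems(2)
  have G: "G \<in> interval_chain_complex" and H: "H \<in> interval_chain_complex"
    using x x' unfolding chain_comb_def by auto
  show ?case
  proof (cases "G = {}")
    case True
    then show ?thesis
      using chain_comb_eq_0_iff[OF x] chain_comb_eq_0_iff[OF x'] by simp
  next
    case False
    then have "H \<noteq> {}"
      using chain_comb_eq_0_iff[OF x] chain_comb_eq_0_iff[OF x'] by simp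
    obtain I0 where I0: "I0 \<in> G" "\<forall>J\<in>G. J \<subseteq> I0"
      using chain_top[OF G False] by blast
    obtain K0 where K0: "K0 \<in> H" "\<forall>J\<in>H. J \<subseteq> K0"
      using chain_top[OF H \<open>H \<noteq> {}\<close>] by blast
    have "K0 = I0"
      using chain_comb_top(1)[OF x I0] chain_comb_top(1)[OF x' K0] by simp
    moreover have "0 < interval_vertex I0 $ Min I0"
      by (simp add: interval_vertex_pos_iff)
    ultimately have "l I0 = m I0"
      using chain_comb_top(2)[OF x I0] chain_comb_top(2)[OF x' K0]
      by (metis less_irrefl mult_cancel_right)
    have "chain_comb (G - {I0}) l (x - l I0 *\<^sub>R interval_vertex I0)"
      "chain_comb (H - {I0}) m (x - l I0 *\<^sub>R interval_vertex I0)"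
      using chain_comb_Diff[OF x I0(1)] chain_comb_Diff[OF x' K0(1)] \<open>K0 = I0\<close> \<open>l I0 = m I0\<close>
      by simp_all
    moreover have "card (G - {I0}) < card G"
      by (rule card_Diff1_less) (simp_all add: I0(1))
    ultimately have "G - {I0} = H - {I0} \<and> (\<forall>I\<in>G - {I0}. l I = m I)"
      using less.hyps by blast
    then show ?thesis
      using I0(1) K0(1) \<open>K0 = I0\<close> \<open>l I0 = m I0\<close> by blast
  qed
qed

text \<open>Existence by peeling off the interval spanned by the support, with the largest coefficient
that keeps the remainder nonnegative.\<close>

lemma chain_comb_exists:
  fixes x :: "real^'n::{finite,linorder}"
  assumes "\<forall>v. 0 \<le> x $ v"
  shows "\<exists>G l. chain_comb G l x"
  using assms
proof (induction "card {v. x $ v \<noteq> 0}" arbitrary: x rule: less_induct)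
  case less
  define S where "S = {v. x $ v \<noteq> 0}"
  show ?case
  proof (cases "S = {}")
    case True
    then have "x = 0"
      by (simp add: S_def vec_eq_iff)
    then show ?thesis
      using chain_comb_empty by blast
  next
    case False
    define a b where "a = Min S" and "b = Max S"
    define I0 where "I0 = {a..b}"
    have "a \<in> S" "b \<in> S"
      using False by (simp_all add: a_def b_def)
    have "S \<subseteq> I0"
      by (simp add: a_def b_def I0_def subset_iff)
    have "a \<le> b" and xab: "0 < x $ a" "0 < x $ b"
      using \<open>a \<in> S\<close> \<open>b \<in> S\<close> \<open>S \<subseteq> I0\<close> less.prems
      by (auto simp: I0_def S_def order.order_iff_strict)
    then have I0: "I0 \<in> intervals" "Min I0 = a" "Max I0 = b"
      by (auto simp: I0_def intervals_def interval_Min_Max)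
    define c where "c = interval_vertex I0 $ a"
    have "0 < c"
      by (simp add: c_def I0 interval_vertex_pos_iff)
    define t where "t = min (x $ a) (x $ b) / c"
    define y where "y = x - t *\<^sub>R interval_vertex I0"
    have y_nth: "y $ v = (if v = a \<or> v = b then x $ v - min (x $ a) (x $ b) else x $ v)" for v
      using \<open>0 < c\<close> interval_vertex_Max[of I0]
      by (auto simp: y_def t_def c_def I0 interval_vertex_nth)
    have "0 < t"
      using xab \<open>0 < c\<close> by (simp add: t_def)
    have y_nonneg: "\<forall>v. 0 \<le> y $ v"
      using less.prems by (simp add: y_nth)
    have y_support: "{v. y $ v \<noteq> 0} \<subseteq> S" "a \<notin> {v. y $ v \<noteq> 0} \<or> b \<notin> {v. y $ v \<noteq> 0}"
      using xab by (auto simp: y_nth S_def min_def)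
    then have "card {v. y $ v \<noteq> 0} < card {v. x $ v \<noteq> 0}"
      using \<open>a \<in> S\<close> \<open>b \<in> S\<close> unfolding S_def by (intro psubset_card_mono) auto
    then obtain G l where y: "chain_comb G l y"
      using less.hyps y_nonneg by blast
    have G: "G \<subseteq> intervals"
      using y interval_chain_complex_intervals unfolding chain_comb_def by blast
    have "endpoints G \<subseteq> I0"
      using chain_comb_support[OF y] y_support \<open>S \<subseteq> I0\<close> by blast
    have "\<forall>J\<in>G. J \<subseteq> I0"
    proof
      fix J assume "J \<in> G"
      then have "Min J \<in> I0" "Max J \<in> I0"
        using \<open>endpoints G \<subseteq> I0\<close> G by (auto simp: endpoints_eq)
      then show "J \<subseteq> I0"
        unfolding I0_def using interval_subset_interval G \<open>J \<in> G\<close> by blast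
    qed
    moreover have "I0 \<notin> G"
      using y_support(2) chain_comb_support[OF y] I0 G by (auto simp: endpoints_eq)
    ultimately have "chain_comb (insert I0 G) (l(I0 := t)) (y + t *\<^sub>R interval_vertex I0)"
      using chain_comb_insert[OF y I0(1) _ _ \<open>0 < t\<close>] by blast
    then show ?thesis
      unfolding y_def by auto
  qed
qed

lemma ex_weights_image_iff:
  assumes "inj_on f G"
  shows "(\<exists>u. (\<forall>y\<in>f ` G. P (u y)) \<and> sum u (f ` G) = 1 \<and> (\<Sum>y\<in>f ` G. u y *\<^sub>R y) = x)
     \<longleftrightarrow> (\<exists>w. (\<forall>I\<in>G. P (w I)) \<and> sum w G = 1 \<and> (\<Sum>I\<in>G. w I *\<^sub>R f I) = x)"
proof
  assume "\<exists>u. (\<forall>y\<in>f ` G. P (u y)) \<and> sum u (f ` G) = 1 \<and> (\<Sum>y\<in>f ` G. u y *\<^sub>R y) = x"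
  then obtain u where "\<forall>y\<in>f ` G. P (u y)" "sum u (f ` G) = 1" "(\<Sum>y\<in>f ` G. u y *\<^sub>R y) = x"
    by blast
  then show "\<exists>w. (\<forall>I\<in>G. P (w I)) \<and> sum w G = 1 \<and> (\<Sum>I\<in>G. w I *\<^sub>R f I) = x"
    using assms by (intro exI[of _ "u \<circ> f"]) (simp add: sum.reindex)
next
  assume "\<exists>w. (\<forall>I\<in>G. P (w I)) \<and> sum w G = 1 \<and> (\<Sum>I\<in>G. w I *\<^sub>R f I) = x"
  then obtain w where "\<forall>I\<in>G. P (w I)" "sum w G = 1" "(\<Sum>I\<in>G. w I *\<^sub>R f I) = x"
    by blast
  then show "\<exists>u. (\<forall>y\<in>f ` G. P (u y)) \<and> sum u (f ` G) = 1 \<and> (\<Sum>y\<in>f ` G. u y *\<^sub>R y) = x"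
    using assms by (intro exI[of _ "w \<circ> inv_into G f"]) (simp add: sum.reindex)
qed

lemma convex_hull_inj_image:
  assumes "finite G" "inj_on f G"
  shows "convex hull (f ` G) =
           {x. \<exists>w. (\<forall>I\<in>G. 0 \<le> w I) \<and> sum w G = 1 \<and> (\<Sum>I\<in>G. w I *\<^sub>R f I) = x}"
  using ex_weights_image_iff[OF assms(2), of "\<lambda>t. 0 \<le> t"]
  by (simp add: convex_hull_finite assms(1))

lemma rel_interior_convex_hull_inj_image:
  fixes f :: "'a \<Rightarrow> 'b::euclidean_space"
  assumes "inj_on f G" "\<not> affine_dependent (f ` G)"
  shows "rel_interior (convex hull (f ` G)) =
           {x. \<exists>w. (\<forall>I\<in>G. 0 < w I) \<and> sum w G = 1 \<and> (\<Sum>I\<in>G. w I *\<^sub>R f I) = x}"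
  using ex_weights_image_iff[OF assms(1), of "\<lambda>t. 0 < t"]
  by (simp add: rel_interior_convex_hull_explicit assms(2))

lemma inj_on_interval_vertex_chain: "G \<in> interval_chain_complex \<Longrightarrow> inj_on interval_vertex G"
  using inj_on_subset[OF inj_on_interval_vertex] interval_chain_complex_intervals by blast

lemma mem_convex_hull_interval_vertices:
  assumes G: "G \<in> interval_chain_complex"
  shows "x \<in> convex hull (interval_vertex ` G) \<longleftrightarrow>
           (\<exists>G'\<subseteq>G. \<exists>l. chain_comb G' l x) \<and> sum (($) x) UNIV = 1"
proof
  assume "x \<in> convex hull (interval_vertex ` G)"
  then obtain w where w: "\<forall>I\<in>G. 0 \<le> w I" "sum w G = 1" "(\<Sum>I\<in>G. w I *\<^sub>R interval_vertex I) = x"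
    by (auto simp: convex_hull_inj_image inj_on_interval_vertex_chain[OF G])
  define G' where "G' = {I\<in>G. 0 < w I}"
  have "sum w G' = sum w G" "(\<Sum>I\<in>G'. w I *\<^sub>R interval_vertex I) = (\<Sum>I\<in>G. w I *\<^sub>R interval_vertex I)"
    unfolding G'_def using w(1) by (auto intro!: sum.mono_neutral_left simp: order.order_iff_strict)
  moreover have "G' \<subseteq> G"
    unfolding G'_def by blast
  ultimately have "chain_comb G' w x" "sum w G' = 1"
    using w interval_chain_complex_subset[OF G] by (auto simp: chain_comb_def G'_def)
  then show "(\<exists>G'\<subseteq>G. \<exists>l. chain_comb G' l x) \<and> sum (($) x) UNIV = 1"
    using chain_comb_coord_sum[of G' w x] \<open>G' \<subseteq> G\<close> by auto
next
  assume "(\<exists>G'\<subseteq>G. \<exists>l. chain_comb G' l x) \<and> sum (($) x) UNIV = 1"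
  then obtain G' l where G': "G' \<subseteq> G" "chain_comb G' l x" "sum l G' = 1"
    using chain_comb_coord_sum by metis
  then have x: "x = (\<Sum>I\<in>G'. l I *\<^sub>R interval_vertex I)" and "\<forall>I\<in>G'. 0 < l I"
    unfolding chain_comb_def by auto
  show "x \<in> convex hull (interval_vertex ` G)"
    unfolding x using G' \<open>\<forall>I\<in>G'. 0 < l I\<close>
    by (intro convex_sum[OF finite convex_convex_hull]) (auto intro: hull_inc less_imp_le)
qed

text \<open>The top vertex is positive at an endpoint where all the other vertices vanish.\<close>

lemma independent_interval_vertices:
  "G \<in> interval_chain_complex \<Longrightarrow> independent (interval_vertex ` G)"
proof (induction "card G" arbitrary: G rule: less_induct)
  case less
  show ?case
  proof (cases "G = {}")
    case False
    obtain I0 where I0: "I0 \<in> G" "\<forall>J\<in>G. J \<subseteq> I0"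
      using chain_top[OF less.prems False] by blast
    obtain c where c: "c = Min I0 \<or> c = Max I0" "\<forall>J\<in>G - {I0}. c \<notin> J"
      using chain_top_endpoint_missing[OF less.prems I0] by blast
    have "interval_vertex J $ c = 0" if "J \<in> G - {I0}" for J
      using c(2) that interval_vertex_pos_iff[of J c] interval_vertex_nonneg[of J c]
        intervals_Min_Max(3,4) interval_chain_complex_intervals[OF less.prems] by force
    then have "span (interval_vertex ` (G - {I0})) \<subseteq> {y. y $ c = 0}"
      by (intro span_minimal) (auto simp: subspace_def)
    moreover have "interval_vertex I0 $ c \<noteq> 0"
      using c(1) interval_vertex_pos_iff[of I0 c] by auto
    ultimately have "interval_vertex I0 \<notin> span (interval_vertex ` (G - {I0}))"
      by blast
    moreover have "card (G - {I0}) < card G"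
      by (rule card_Diff1_less) (simp_all add: I0(1))
    then have "independent (interval_vertex ` (G - {I0}))"
      using less.hyps interval_chain_complex_subset[OF less.prems] by blast
    ultimately have "independent (insert (interval_vertex I0) (interval_vertex ` (G - {I0})))"
      by (rule independent_insertI)
    moreover have "interval_vertex ` G = insert (interval_vertex I0) (interval_vertex ` (G - {I0}))"
      using I0(1) by blast
    ultimately show ?thesis
      by simp
  qed (simp add: independent_empty)
qed

lemma affine_independent_interval_vertices:
  "G \<in> interval_chain_complex \<Longrightarrow> \<not> affine_dependent (interval_vertex ` G)"
  using independent_interval_vertices affine_dependent_imp_dependent by blast

lemma mem_rel_interior_interval_vertices:
  assumes G: "G \<in> interval_chain_complex"
  shows "x \<in> rel_interior (convex hull (interval_vertex ` G)) \<longleftrightarrow>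
           (\<exists>l. chain_comb G l x) \<and> sum (($) x) UNIV = 1"
proof -
  have "x \<in> rel_interior (convex hull (interval_vertex ` G)) \<longleftrightarrow> (\<exists>l. chain_comb G l x \<and> sum l G = 1)"
    using G by (auto simp: rel_interior_convex_hull_inj_image inj_on_interval_vertex_chain
        affine_independent_interval_vertices chain_comb_def)
  also have "\<dots> \<longleftrightarrow> (\<exists>l. chain_comb G l x) \<and> sum (($) x) UNIV = 1"
    using chain_comb_coord_sum by metis
  finally show ?thesis .
qed

lemma convex_hull_interval_vertices_Int:
  assumes G: "G \<in> interval_chain_complex" and H: "H \<in> interval_chain_complex"
  shows "convex hull (interval_vertex ` G) \<inter> convex hull (interval_vertex ` H) =
           convex hull (interval_vertex ` (G \<inter> H))"
proof
  show "convex hull (interval_vertex ` (G \<inter> H)) \<subseteq>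
          convex hull (interval_vertex ` G) \<inter> convex hull (interval_vertex ` H)"
    by (simp add: hull_mono image_mono)
  show "convex hull (interval_vertex ` G) \<inter> convex hull (interval_vertex ` H) \<subseteq>
          convex hull (interval_vertex ` (G \<inter> H))"
  proof
    fix x assume "x \<in> convex hull (interval_vertex ` G) \<inter> convex hull (interval_vertex ` H)"
    then obtain G' H' l m where "G' \<subseteq> G" "chain_comb G' l x" "H' \<subseteq> H" "chain_comb H' m x"
      and "sum (($) x) UNIV = 1"
      using mem_convex_hull_interval_vertices[OF G] mem_convex_hull_interval_vertices[OF H] by blast
    moreover have "G' = H'"
      using chain_comb_unique \<open>chain_comb G' l x\<close> \<open>chain_comb H' m x\<close> by blast
    ultimately show "x \<in> convex hull (interval_vertex ` (G \<inter> H))"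
      using mem_convex_hull_interval_vertices interval_chain_complex_subset[OF G]
      by (metis Int_greatest inf.cobounded1)
  qed
qed

definition unit_vec :: "'n::finite \<Rightarrow> (real, 'n) vec" where
  "unit_vec v = axis v 1"

definition simplex_face :: "'n::finite set \<Rightarrow> (real, 'n) vec set" where
  "simplex_face F = {x. (\<forall>v. 0 \<le> x $ v) \<and> (\<forall>v. v \<notin> F \<longrightarrow> x $ v = 0) \<and> sum (($) x) UNIV = 1}"

lemma inj_unit_vec: "inj unit_vec"
  by (rule injI) (simp add: unit_vec_def axis_eq_axis)

lemma sum_unit_vec_nth: "(\<Sum>v\<in>F. w v *\<^sub>R unit_vec v) $ u = (if u \<in> F then w u else 0)"
  by (simp add: unit_vec_def axis_def if_distrib sum.delta cong: if_cong)

lemma sum_unit_vec_eq_iff: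
  "(\<Sum>v\<in>F. w v *\<^sub>R unit_vec v) = x \<longleftrightarrow> (\<forall>u. x $ u = (if u \<in> F then w u else 0))"
  unfolding vec_eq_iff sum_unit_vec_nth by auto

lemma sum_coord_subset:
  assumes "\<forall>v. v \<notin> F \<longrightarrow> x $ v = 0"
  shows "sum (($) x) F = sum (($) x) UNIV"
  using assms by (intro sum.mono_neutral_left) auto

lemma ex_weights_unit_vec_iff:
  "(\<exists>w. (\<forall>v\<in>F. P (w v)) \<and> sum w F = 1 \<and> (\<Sum>v\<in>F. w v *\<^sub>R unit_vec v) = x) \<longleftrightarrow>
     (\<forall>v\<in>F. P (x $ v)) \<and> (\<forall>v. v \<notin> F \<longrightarrow> x $ v = 0) \<and> sum (($) x) UNIV = 1"
proof
  assume "\<exists>w. (\<forall>v\<in>F. P (w v)) \<and> sum w F = 1 \<and> (\<Sum>v\<in>F. w v *\<^sub>R unit_vec v) = x"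
  then obtain w where w: "\<forall>v\<in>F. P (w v)" "sum w F = 1" "\<forall>u. x $ u = (if u \<in> F then w u else 0)"
    unfolding sum_unit_vec_eq_iff by blast
  moreover have "sum (($) x) F = sum w F"
    using w(3) by (intro sum.cong) auto
  ultimately show "(\<forall>v\<in>F. P (x $ v)) \<and> (\<forall>v. v \<notin> F \<longrightarrow> x $ v = 0) \<and> sum (($) x) UNIV = 1"
    using sum_coord_subset[of F x] by auto
next
  assume "(\<forall>v\<in>F. P (x $ v)) \<and> (\<forall>v. v \<notin> F \<longrightarrow> x $ v = 0) \<and> sum (($) x) UNIV = 1"
  then show "\<exists>w. (\<forall>v\<in>F. P (w v)) \<and> sum w F = 1 \<and> (\<Sum>v\<in>F. w v *\<^sub>R unit_vec v) = x"
    unfolding sum_unit_vec_eq_iff using sum_coord_subset[of F x] by (intro exI[of _ "($) x"]) auto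
qed

lemma independent_unit_vec: "independent (unit_vec ` F)"
proof -
  have "unit_vec ` F \<subseteq> Basis"
    by (auto simp: Basis_vec_def unit_vec_def)
  then show ?thesis
    using independent_mono[OF independent_Basis] by blast
qed

lemma convex_hull_unit_vec: "convex hull (unit_vec ` F) = simplex_face F"
proof -
  have "(\<forall>v\<in>F. 0 \<le> x $ v) \<and> (\<forall>v. v \<notin> F \<longrightarrow> x $ v = 0) \<longleftrightarrow>
          (\<forall>v. 0 \<le> x $ v) \<and> (\<forall>v. v \<notin> F \<longrightarrow> x $ v = 0)" for x :: "(real, 'a) vec"
    by (metis order_refl)
  then show ?thesis
    using ex_weights_unit_vec_iff[of F "\<lambda>t. 0 \<le> t"]
    by (auto simp: convex_hull_inj_image inj_on_subset[OF inj_unit_vec] simplex_face_def)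
qed

lemma rel_interior_convex_hull_unit_vec:
  "rel_interior (convex hull (unit_vec ` F)) = {x \<in> simplex_face F. \<forall>v\<in>F. 0 < x $ v}"
proof -
  have "\<not> affine_dependent (unit_vec ` F)"
    using independent_unit_vec affine_dependent_imp_dependent by blast
  moreover have "0 \<le> x $ v" if "\<forall>v\<in>F. 0 < x $ v" "\<forall>v. v \<notin> F \<longrightarrow> x $ v = 0"
    for x :: "(real, _) vec" and v
    using that by (cases "v \<in> F") auto
  ultimately show ?thesis
    using ex_weights_unit_vec_iff[of F "\<lambda>t. 0 < t"]
    by (auto simp: rel_interior_convex_hull_inj_image inj_on_subset[OF inj_unit_vec subset_UNIV]
        simplex_face_def less_imp_le)
qed

lemma aff_dim_convex_hull_unit_vec:
  assumes "F \<noteq> {}"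
  shows "aff_dim (convex hull (unit_vec ` F)) = int (card F - 1)"
proof -
  have "int (card (unit_vec ` F)) = aff_dim (unit_vec ` F) + 1"
    using independent_unit_vec affine_dependent_imp_dependent
    by (blast intro: aff_dim_affine_independent)
  moreover have "card (unit_vec ` F) = card F"
    using inj_on_subset[OF inj_unit_vec subset_UNIV] by (rule card_image)
  moreover have "1 \<le> card F"
    using assms by (simp add: Suc_le_eq card_gt_0_iff)
  ultimately show ?thesis
    by (simp add: aff_dim_convex_hull of_nat_diff)
qed

section \<open>Convex bodies are balls\<close>

lemma homeomorphism_rel_interior:
  fixes S :: "'a::euclidean_space set" and T :: "'b::euclidean_space set"
  assumes hk: "homeomorphism S T h k" and "aff_dim S = aff_dim T"
  shows "h ` rel_interior S = rel_interior T"
proof -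
  have hS: "h ` S = T" and kT: "k ` T = S" and ch: "continuous_on S h" and ck: "continuous_on T k"
    and kh: "\<forall>x\<in>S. k (h x) = x" and hk': "\<forall>y\<in>T. h (k y) = y"
    using hk unfolding homeomorphism_def by auto
  have "inj_on h S" "inj_on k T"
    using kh hk' by (metis inj_onI)+
  have h: "h \<in> rel_interior S \<rightarrow> rel_interior (h ` S)"
  proof (rule continuous_image_subset_rel_interior[OF ch \<open>inj_on h S\<close>])
    show "h \<in> S \<rightarrow> T" "aff_dim T \<le> aff_dim S"
      using hS assms(2) by auto
  qed
  have k: "k \<in> rel_interior T \<rightarrow> rel_interior (k ` T)"
  proof (rule continuous_image_subset_rel_interior[OF ck \<open>inj_on k T\<close>])
    show "k \<in> T \<rightarrow> S" "aff_dim S \<le> aff_dim T"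
      using kT assms(2) by auto
  qed
  show ?thesis
  proof
    show "h ` rel_interior S \<subseteq> rel_interior T"
      using h hS by auto
    show "rel_interior T \<subseteq> h ` rel_interior S"
    proof
      fix y assume y: "y \<in> rel_interior T"
      then have "k y \<in> rel_interior S" "h (k y) = y"
        using k kT hk' rel_interior_subset by auto
      then show "y \<in> h ` rel_interior S"
        by (metis imageI)
    qed
  qed
qed

lemma rel_interior_cball_Int_subspace:
  fixes T :: "'a::euclidean_space set"
  assumes "subspace T"
  shows "rel_interior (cball 0 1 \<inter> T) = ball 0 1 \<inter> T"
proof -
  have ball: "rel_interior (cball (0::'a) 1) = ball 0 1"
    by (subst rel_interior_nonempty_interior) auto
  have T: "rel_interior T = T"
    by (rule rel_interior_affine[OF subspace_imp_affine[OF assms]])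
  have "0 \<in> rel_interior (cball 0 1) \<inter> rel_interior T"
    unfolding ball T using subspace_0[OF assms] by simp
  then have "rel_interior (cball 0 1 \<inter> T) = rel_interior (cball 0 1) \<inter> rel_interior T"
    using convex_rel_interior_inter_two[OF convex_cball subspace_imp_convex[OF assms]] by blast
  then show ?thesis
    unfolding ball T .
qed

lemma convex_compact_homeomorphism_ball:
  fixes P :: "'a::euclidean_space set"
  assumes "convex P" "compact P" "aff_dim P = int n" "n \<le> DIM('a)"
  shows "\<exists>(T::'a set) h k. subspace T \<and> dim T = n \<and> homeomorphism P (cball 0 1 \<inter> T) h k \<and>
            h ` rel_interior P = ball 0 1 \<inter> T"
proof -
  obtain T :: "'a set" where T: "subspace T" "dim T = n"
    using choose_subspace_of_subspace[of n "UNIV :: 'a set"] assms(4) by auto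
  define B where "B = cball 0 1 \<inter> T"
  have "convex B" "compact B"
    unfolding B_def using T(1)
    by (simp_all add: convex_Int subspace_imp_convex compact_Int_closed closed_subspace)
  have "aff_dim (ball 0 1 \<inter> T) = aff_dim T"
    using aff_dim_convex_Int_open[OF subspace_imp_convex[OF T(1)] open_ball] subspace_0[OF T(1)]
    by (metis centre_in_ball disjoint_iff zero_less_one inf_commute)
  moreover have "aff_dim (ball 0 1 \<inter> T) \<le> aff_dim B" "aff_dim B \<le> aff_dim T"
    unfolding B_def by (auto intro: aff_dim_subset)
  ultimately have "aff_dim B = int n"
    using aff_dim_subspace[OF T(1)] T(2) by simp
  then obtain h k where "homeomorphism P B h k"
    using homeomorphic_convex_compact_sets[OF assms(1,2) \<open>convex B\<close> \<open>compact B\<close>] assms(3)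
    unfolding homeomorphic_def by auto
  moreover have "h ` rel_interior P = ball 0 1 \<inter> T"
    using homeomorphism_rel_interior[OF calculation] \<open>aff_dim B = int n\<close> assms(3)
      rel_interior_cball_Int_subspace[OF T(1)] unfolding B_def by simp
  ultimately show ?thesis
    using T unfolding B_def by blast
qed

lemma polyhedron_endpoints_within:
  "polyhedron {G \<in> interval_chain_complex. endpoints G \<subseteq> F} interval_vertex =
     convex hull (unit_vec ` F)"
proof
  show "polyhedron {G \<in> interval_chain_complex. endpoints G \<subseteq> F} interval_vertex \<subseteq>
          convex hull (unit_vec ` F)"
  proof
    fix x assume "x \<in> polyhedron {G \<in> interval_chain_complex. endpoints G \<subseteq> F} interval_vertex"
    then obtain G G' l where "G \<in> interval_chain_complex" "endpoints G \<subseteq> F" "G' \<subseteq> G"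
      "chain_comb G' l x" "sum (($) x) UNIV = 1"
      unfolding polyhedron_def using mem_convex_hull_interval_vertices by blast
    then show "x \<in> convex hull (unit_vec ` F)"
      using chain_comb_support chain_comb_nonneg endpoints_mono
      unfolding convex_hull_unit_vec simplex_face_def by blast
  qed
  show "convex hull (unit_vec ` F) \<subseteq>
          polyhedron {G \<in> interval_chain_complex. endpoints G \<subseteq> F} interval_vertex"
  proof
    fix x assume "x \<in> convex hull (unit_vec ` F)"
    then have x: "x \<in> simplex_face F"
      by (simp add: convex_hull_unit_vec)
    then obtain G l where "chain_comb G l x"
      using chain_comb_exists unfolding simplex_face_def by blast
    moreover from this have "G \<in> interval_chain_complex" "endpoints G \<subseteq> F"
      using x chain_comb_support unfolding chain_comb_def simplex_face_def by blast+
    ultimately show "x \<in> polyhedron {G \<in> interval_chain_complex. endpoints G \<subseteq> F} interval_vertex"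
      using x mem_convex_hull_interval_vertices unfolding polyhedron_def simplex_face_def by blast
  qed
qed

lemma Union_rel_interior_endpoints_eq:
  "(\<Union>G\<in>{G \<in> interval_chain_complex. endpoints G = F}. rel_interior (convex hull (interval_vertex ` G)))
     = rel_interior (convex hull (unit_vec ` F))"
proof -
  have face: "x \<in> simplex_face F \<and> (\<forall>v\<in>F. 0 < x $ v) \<longleftrightarrow>
          (\<exists>G l. chain_comb G l x \<and> endpoints G = F) \<and> sum (($) x) UNIV = 1" for x
  proof
    assume x: "x \<in> simplex_face F \<and> (\<forall>v\<in>F. 0 < x $ v)"
    then have "\<forall>v. 0 \<le> x $ v" and sum: "sum (($) x) UNIV = 1"
      unfolding simplex_face_def by auto
    then obtain G l where G: "chain_comb G l x"
      using chain_comb_exists by blast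
    have "{v. x $ v \<noteq> 0} = F"
      using x unfolding simplex_face_def by force
    then have "endpoints G = F"
      using chain_comb_support[OF G] by simp
    then show "(\<exists>G l. chain_comb G l x \<and> endpoints G = F) \<and> sum (($) x) UNIV = 1"
      using G sum by blast
  next
    assume "(\<exists>G l. chain_comb G l x \<and> endpoints G = F) \<and> sum (($) x) UNIV = 1"
    then obtain G l where G: "chain_comb G l x" "endpoints G = F" and sum: "sum (($) x) UNIV = 1"
      by blast
    then have "x $ v \<noteq> 0 \<longleftrightarrow> v \<in> F" for v
      using chain_comb_support[OF G(1)] by blast
    moreover have "0 \<le> x $ v" for v
      using chain_comb_nonneg[OF G(1)] .
    ultimately show "x \<in> simplex_face F \<and> (\<forall>v\<in>F. 0 < x $ v)"
      unfolding simplex_face_def using sum by (auto simp: less_le)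
  qed
  have union: "x \<in> (\<Union>G\<in>{G \<in> interval_chain_complex. endpoints G = F}.
                      rel_interior (convex hull (interval_vertex ` G))) \<longleftrightarrow>
          (\<exists>G l. chain_comb G l x \<and> endpoints G = F) \<and> sum (($) x) UNIV = 1" for x
  proof
    assume "x \<in> (\<Union>G\<in>{G \<in> interval_chain_complex. endpoints G = F}.
                   rel_interior (convex hull (interval_vertex ` G)))"
    then obtain G where "G \<in> interval_chain_complex" "endpoints G = F"
      "x \<in> rel_interior (convex hull (interval_vertex ` G))"
      by blast
    then show "(\<exists>G l. chain_comb G l x \<and> endpoints G = F) \<and> sum (($) x) UNIV = 1"
      using mem_rel_interior_interval_vertices[of G x] by blast
  next
    assume "(\<exists>G l. chain_comb G l x \<and> endpoints G = F) \<and> sum (($) x) UNIV = 1"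
    then obtain G l where "chain_comb G l x" "endpoints G = F" "sum (($) x) UNIV = 1"
      by blast
    moreover from this have "G \<in> interval_chain_complex"
      by (simp add: chain_comb_def)
    ultimately show "x \<in> (\<Union>G\<in>{G \<in> interval_chain_complex. endpoints G = F}.
                          rel_interior (convex hull (interval_vertex ` G)))"
      using mem_rel_interior_interval_vertices[of G x] by blast
  qed
  show ?thesis
    unfolding rel_interior_convex_hull_unit_vec
    by (rule set_eqI) (simp only: union face mem_Collect_eq)
qed

lemma simplicial_complex_interval_chain_complex:
  "simplicial_complex (interval_chain_complex :: 'n::{finite,linorder} set set set)"
  unfolding simplicial_complex_def
proof (intro conjI ballI allI impI)
  show "{} \<in> interval_chain_complex"
    by (simp add: interval_chain_complex_def)
  fix G H :: "'n set set"
  assume "G \<in> interval_chain_complex" "H \<subseteq> G"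
  then show "H \<in> interval_chain_complex"
    by (rule interval_chain_complex_subset)
qed simp_all

lemma geometric_realization_interval_vertex:
  "geometric_realization (interval_chain_complex :: 'n::{finite,linorder} set set set) interval_vertex"
  unfolding geometric_realization_def
  using inj_on_interval_vertex_chain affine_independent_interval_vertices
    convex_hull_interval_vertices_Int by blast

lemma simplicial_subdivision_interval_chain_complex:
  "simplicial_subdivision_wrt UNIV (interval_chain_complex :: 'n::{finite,linorder} set set set)
     endpoints (interval_vertex :: 'n set \<Rightarrow> (real, 'n) vec)"
  unfolding simplicial_subdivision_wrt_def
proof (intro conjI allI impI ballI)
  fix F :: "'n set" and G H
  assume "endpoints G \<subseteq> F \<and> H \<subseteq> G"
  then show "endpoints H \<subseteq> F"
    using endpoints_mono by blast
next
  fix F :: "'n set"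
  assume "F = {}"
  then show "{G \<in> interval_chain_complex. endpoints G \<subseteq> F} = {{}}"
    using endpoints_eq_empty_iff interval_chain_complex_intervals
    by (auto simp: interval_chain_complex_def)
next
  fix F :: "'n set"
  assume "F \<noteq> {}"
  have "card F - 1 \<le> DIM((real, 'n) vec)"
    using card_mono[of UNIV F] by simp
  then have "\<exists>(T::(real, 'n) vec set) h k. subspace T \<and> dim T = card F - 1 \<and>
      homeomorphism (convex hull (unit_vec ` F)) (cball 0 1 \<inter> T) h k \<and>
      h ` rel_interior (convex hull (unit_vec ` F)) = ball 0 1 \<inter> T"
    using aff_dim_convex_hull_unit_vec[OF \<open>F \<noteq> {}\<close>]
    by (intro convex_compact_homeomorphism_ball) (auto intro: finite_imp_compact_convex_hull)
  then show "\<exists>(T::(real, 'n) vec set) h k. subspace T \<and> dim T = card F - 1 \<and>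
      homeomorphism (polyhedron {G \<in> interval_chain_complex. endpoints G \<subseteq> F} interval_vertex)
        (cball 0 1 \<inter> T) h k \<and>
      h ` (\<Union>G\<in>{G \<in> interval_chain_complex. endpoints G = F}.
             rel_interior (convex hull (interval_vertex ` G))) = ball 0 1 \<inter> T"
    by (simp only: polyhedron_endpoints_within Union_rel_interior_endpoints_eq)
qed (simp_all add: simplicial_complex_interval_chain_complex geometric_realization_interval_vertex)

lemma geometric_subdivision_interval_chain_complex:
  "geometric_subdivision TYPE(real^'n::{finite,linorder}) (UNIV :: 'n set)
     (interval_chain_complex :: 'n set set set) endpoints"
  unfolding geometric_subdivision_def
proof (intro conjI exI[of _ unit_vec] exI[of _ interval_vertex] ballI)
  show "\<not> affine_dependent (unit_vec ` (UNIV :: 'n set))"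
    using independent_unit_vec affine_dependent_imp_dependent by blast
  show "polyhedron interval_chain_complex interval_vertex = convex hull (unit_vec ` (UNIV :: 'n set))"
    using polyhedron_endpoints_within[of "UNIV :: 'n set"] by simp
  fix G :: "'n set set"
  assume G: "G \<in> interval_chain_complex"
  then have "convex hull (interval_vertex ` G) \<subseteq>
      polyhedron {G' \<in> interval_chain_complex. endpoints G' \<subseteq> endpoints G} interval_vertex"
    unfolding polyhedron_def by blast
  then show "convex hull (interval_vertex ` G) \<subseteq> convex hull (unit_vec ` endpoints G)"
    by (simp only: polyhedron_endpoints_within)
  have "rel_interior (convex hull (interval_vertex ` G)) \<subseteq>
      (\<Union>G'\<in>{G' \<in> interval_chain_complex. endpoints G' = endpoints G}.
         rel_interior (convex hull (interval_vertex ` G')))"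
    using G by blast
  then show "rel_interior (convex hull (interval_vertex ` G)) \<subseteq>
      rel_interior (convex hull (unit_vec ` endpoints G))"
    by (simp only: Union_rel_interior_endpoints_eq)
qed (simp_all add: inj_unit_vec simplicial_subdivision_interval_chain_complex)

section \<open>Counting facets\<close>

lemma facetsI: "C \<in> \<Gamma> \<Longrightarrow> (\<And>H. H \<in> \<Gamma> \<Longrightarrow> C \<subseteq> H \<Longrightarrow> H = C) \<Longrightarrow> C \<in> facets \<Gamma>"
  unfolding facets_def by blast

lemma facetsD: "C \<in> facets \<Gamma> \<Longrightarrow> C \<in> \<Gamma>"
  unfolding facets_def by blast

lemma facets_maximal: "C \<in> facets \<Gamma> \<Longrightarrow> H \<in> \<Gamma> \<Longrightarrow> C \<subseteq> H \<Longrightarrow> H = C"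
  unfolding facets_def by blast

definition chains_within :: "'n::{finite,linorder} set \<Rightarrow> 'n set set set" where
  "chains_within J = {G \<in> interval_chain_complex. \<forall>I\<in>G. I \<subseteq> J}"

lemma chains_within_UNIV: "chains_within UNIV = interval_chain_complex"
  unfolding chains_within_def by simp

lemma chains_within_mono: "J' \<subseteq> J \<Longrightarrow> chains_within J' \<subseteq> chains_within J"
  unfolding chains_within_def by blast

lemma insert_chains_within:
  "J \<in> intervals \<Longrightarrow> C \<in> chains_within J \<Longrightarrow> insert J C \<in> chains_within J"
  unfolding chains_within_def by (auto intro: interval_chain_complex_insert)

lemma facet_chains_within_top:
  assumes "J \<in> intervals" "C \<in> facets (chains_within J)"
  shows "J \<in> C"
proof -
  have "insert J C \<in> chains_within J"
    by (rule insert_chains_within[OF assms(1) facetsD[OF assms(2)]])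
  then have "insert J C = C"
    by (rule facets_maximal[OF assms(2)]) blast
  then show ?thesis
    by (metis insertI1)
qed

lemma facets_chains_within_singleton: "facets (chains_within {a}) = {{{a}}}"
proof -
  have "{a..a} \<in> intervals"
    unfolding intervals_def by blast
  then have "{{a}} \<in> chains_within {a}"
    unfolding chains_within_def interval_chain_complex_def by simp
  moreover have "C \<subseteq> {{a}}" if "C \<in> chains_within {a}" for C
  proof
    fix I assume "I \<in> C"
    then have "I \<in> intervals" "I \<subseteq> {a}"
      using that unfolding chains_within_def interval_chain_complex_def by auto
    then show "I \<in> {{a}}"
      using intervals_ne[of I] by blast
  qed
  ultimately show ?thesis
    unfolding facets_def by blast
qed

lemma insert_facet_chains_within:
  assumes J: "J \<in> intervals" and c: "c \<in> J" "J - {c} \<in> intervals"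
    and C: "C \<in> facets (chains_within (J - {c}))"
  shows "insert J C \<in> facets (chains_within J)"
proof (rule facetsI)
  have C_within: "C \<in> chains_within (J - {c})"
    by (rule facetsD[OF C])
  then show "insert J C \<in> chains_within J"
    using insert_chains_within[OF J] chains_within_mono[of "J - {c}" J] by blast
  have "J - {c} \<in> C"
    by (rule facet_chains_within_top[OF c(2) C])
  have "J \<notin> C"
    using C_within c(1) unfolding chains_within_def by blast
  fix H assume H: "H \<in> chains_within J" "insert J C \<subseteq> H"
  have HC: "H \<in> interval_chain_complex" "\<forall>I\<in>H. I \<subseteq> J"
    using H(1) unfolding chains_within_def by auto
  have sub: "K \<subseteq> J - {c}" if "K \<in> H - {J}" for K
  proof -
    have "K \<in> H" "J - {c} \<in> H" "K \<subseteq> J" "K \<noteq> J"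
      using that H(2) HC(2) \<open>J - {c} \<in> C\<close> by auto
    then have "K \<subseteq> J - {c} \<or> J - {c} \<subseteq> K"
      using interval_chain_complex_chain[OF HC(1)] by blast
    then show ?thesis
      using \<open>K \<subseteq> J\<close> \<open>K \<noteq> J\<close> by (cases "c \<in> K") blast+
  qed
  have "H - {J} \<in> interval_chain_complex"
    by (rule interval_chain_complex_subset[OF HC(1)]) blast
  then have "H - {J} \<in> chains_within (J - {c})"
    using sub unfolding chains_within_def by blast
  moreover have "C \<subseteq> H - {J}"
    using H(2) \<open>J \<notin> C\<close> by blast
  ultimately have "H - {J} = C"
    by (rule facets_maximal[OF C])
  moreover have "J \<in> H"
    using H(2) by blast
  ultimately show "H = insert J C"
    using insert_Diff[of J H] by simp
qed

lemma facet_chains_within_Diff: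
  assumes J: "J \<in> intervals" and "c \<in> J" and D: "D \<in> facets (chains_within J)"
    and c: "\<forall>K\<in>D - {J}. c \<notin> K"
  shows "D - {J} \<in> facets (chains_within (J - {c}))"
proof (rule facetsI)
  have D_within: "D \<in> interval_chain_complex" "\<forall>I\<in>D. I \<subseteq> J"
    using facetsD[OF D] unfolding chains_within_def by auto
  have "D - {J} \<in> interval_chain_complex"
    by (rule interval_chain_complex_subset[OF D_within(1)]) blast
  then show "D - {J} \<in> chains_within (J - {c})"
    using D_within(2) c unfolding chains_within_def by blast
  fix H assume H: "H \<in> chains_within (J - {c})" "D - {J} \<subseteq> H"
  have "insert J H \<in> chains_within J"
    using insert_chains_within[OF J] chains_within_mono[of "J - {c}" J] H(1) by blast
  moreover have "D \<subseteq> insert J H"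
    using H(2) by blast
  ultimately have "insert J H = D"
    by (rule facets_maximal[OF D])
  moreover have "J \<notin> H"
    using H(1) \<open>c \<in> J\<close> unfolding chains_within_def by blast
  ultimately show "H = D - {J}"
    using Diff_insert_absorb[of J H] by simp
qed

lemma facets_chains_within_split:
  assumes J: "J \<in> intervals" and "Min J \<noteq> Max J"
  defines "F1 \<equiv> facets (chains_within (J - {Min J}))" and "F2 \<equiv> facets (chains_within (J - {Max J}))"
  shows "facets (chains_within J) = insert J ` (F1 \<union> F2)" and "F1 \<inter> F2 = {}"
    and "inj_on (insert J) (F1 \<union> F2)"
proof -
  have ends: "Min J \<in> J" "Max J \<in> J"
    using intervals_Min_Max(3,4)[OF J] .
  then have "J \<noteq> {Min J}" "J \<noteq> {Max J}"
    using \<open>Min J \<noteq> Max J\<close> by (metis singletonD)+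
  then have J12: "J - {Min J} \<in> intervals" "J - {Max J} \<in> intervals"
    using intervals_Diff_endpoint[OF J] by blast+
  have within: "\<forall>I\<in>C. I \<subseteq> J - {Min J}" if "C \<in> F1" for C
    using facetsD[OF that[unfolded F1_def]] unfolding chains_within_def by blast
  have within': "\<forall>I\<in>C. I \<subseteq> J - {Max J}" if "C \<in> F2" for C
    using facetsD[OF that[unfolded F2_def]] unfolding chains_within_def by blast
  have J_notin: "J \<notin> C" if "C \<in> F1 \<union> F2" for C
    using that within within' ends by blast
  show "facets (chains_within J) = insert J ` (F1 \<union> F2)"
  proof
    show "facets (chains_within J) \<subseteq> insert J ` (F1 \<union> F2)"
    proof
      fix D assume D: "D \<in> facets (chains_within J)"
      then have "J \<in> D" "D \<in> interval_chain_complex" "\<forall>I\<in>D. I \<subseteq> J"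
        using facet_chains_within_top[OF J] facetsD[OF D] unfolding chains_within_def by auto
      then obtain c where "c = Min J \<or> c = Max J" "\<forall>K\<in>D - {J}. c \<notin> K"
        using chain_top_endpoint_missing by blast
      then have "D - {J} \<in> F1 \<union> F2"
        using facet_chains_within_Diff[OF J _ D] ends unfolding F1_def F2_def by blast
      then show "D \<in> insert J ` (F1 \<union> F2)"
        using insert_Diff[OF \<open>J \<in> D\<close>] by (metis image_eqI)
    qed
    show "insert J ` (F1 \<union> F2) \<subseteq> facets (chains_within J)"
      using insert_facet_chains_within[OF J] ends J12 unfolding F1_def F2_def by blast
  qed
  show "F1 \<inter> F2 = {}"
  proof (rule ccontr)
    assume "F1 \<inter> F2 \<noteq> {}"
    then obtain C where "C \<in> F1" "C \<in> F2"
      by blast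
    have "J - {Min J} \<in> C"
      using \<open>C \<in> F1\<close> unfolding F1_def by (rule facet_chains_within_top[OF J12(1)])
    then have "J - {Min J} \<subseteq> J - {Max J}"
      by (rule bspec[OF within'[OF \<open>C \<in> F2\<close>]])
    moreover have "Max J \<in> J - {Min J}"
      using ends \<open>Min J \<noteq> Max J\<close> by simp
    ultimately show False
      by auto
  qed
  show "inj_on (insert J) (F1 \<union> F2)"
    using J_notin by (intro inj_onI) (metis insert_ident)
qed

lemma card_facets_chains_within:
  "J \<in> intervals \<Longrightarrow> card (facets (chains_within J)) = 2 ^ (card J - 1)"
proof (induction "card J" arbitrary: J rule: less_induct)
  case less
  define a b where "a = Min J" and "b = Max J"
  show ?case
  proof (cases "a = b")
    case True
    then have "J = {a}"
      using intervals_Min_Max(1)[OF less.prems] unfolding a_def b_def by simp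
    then show ?thesis
      by (simp add: facets_chains_within_singleton)
  next
    case False
    have ends: "a \<in> J" "b \<in> J"
      using intervals_Min_Max(3,4)[OF less.prems] unfolding a_def b_def .
    then have card_Diff: "card (J - {a}) = card J - 1" "card (J - {b}) = card J - 1"
      by simp_all
    have "card {a, b} \<le> card J"
      using ends by (intro card_mono) auto
    then obtain m where m: "card J = Suc (Suc m)"
      using False by (metis card_2_iff le_Suc_ex add_2_eq_Suc)
    have "J \<noteq> {a}" "J \<noteq> {b}"
      using ends False by (metis singletonD)+
    then have "J - {a} \<in> intervals" "J - {b} \<in> intervals"
      using intervals_Diff_endpoint[OF less.prems] unfolding a_def b_def by blast+
    then have "card (facets (chains_within (J - {a}))) = 2 ^ m"
      "card (facets (chains_within (J - {b}))) = 2 ^ m"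
      using less.hyps card_Diff m by simp_all
    moreover have "finite (facets (chains_within (J - {a})))" "finite (facets (chains_within (J - {b})))"
      by simp_all
    ultimately have "card (facets (chains_within J)) = 2 ^ m + 2 ^ m"
      using facets_chains_within_split[OF less.prems False[unfolded a_def b_def]]
      unfolding a_def b_def by (simp add: card_image card_Un_disjoint)
    then show ?thesis
      using m by simp
  qed
qed

lemma card_facets_interval_chain_complex:
  "card (facets (interval_chain_complex :: 'n::{finite,linorder} set set set)) = 2 ^ (CARD('n) - 1)"
proof -
  have "(UNIV :: 'n set) \<in> intervals"
    by (rule intervalsI_order_convex) simp_all
  from card_facets_chains_within[OF this] show ?thesis
    by (simp add: chains_within_UNIV)
qed

theorem lemma6p2:
  shows "geometric_subdivision TYPE(real^'n::{finite,linorder}) (UNIV :: 'n set)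
            (interval_chain_complex :: 'n set set set) endpoints
       \<and> card (facets (interval_chain_complex :: 'n set set set)) = 2 ^ (CARD('n) - 1)"
  using geometric_subdivision_interval_chain_complex card_facets_interval_chain_complex by blast

end
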